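(* Let $E$, $F$ be locally convex spaces and let $\phi_{1},\phi_{2}:E\times F\to\overline{\mathbb{R}}$ be proper convex functions. Define $\rho:E\times F\to\overline{\mathbb{R}}$ by $\rho(x,y):=\inf\{\phi_{1}(x,y_{1})+\phi_{2}(x,y_{2})\mid y_{1}+y_{2}=y\}$. Assume there exists $(x_{0},y_{0})\in\operatorname{dom}\phi_{2}$ such that $x_{0}\in\operatorname{Pr}_{E}(\operatorname{dom}\phi_{1})$ and $\phi_{2}(\cdot,y_{0})$ is continuous at $x_{0}$. Then for every $x^{*}\in E^{*}$, $y^{*}\in F^{*}$, \[\rho^{*}(x^{*},y^{*})=\min\{\phi_{1}^{*}(x_{1}^{*},y^{*})+\phi_{2}^{*}(x_{2}^{*},y^{*})\mid x_{1}^{*},x_2^*\in E^*,\ x_{1}^{*}+x_{2}^{*}=x^{*}\},\] where "$\min$" denotes an infimum that is attained when it is finite.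
   Context: Locally convex spaces are Hausdorff; $E^*,F^*$ are topological duals and the conjugate of $f:E\times F\to\overline{\mathbb R}$ is $f^*(x^*,y^* )=\sup\{\langle x,x^*\rangle+\langle y,y^*\rangle-f(x,y)\}$. $\operatorname{dom}\phi=\{\phi<\infty\}$; $\operatorname{Pr}_E$ is the projection onto $E$; proper means not identically $+\infty$ and never $-\infty$. *)

theory Defs
  imports "HOL-Analysis.Analysis"
begin

definition locally_convex_space :: "('a::{real_vector,t2_space}) itself \<Rightarrow> bool" where
  "locally_convex_space _ \<longleftrightarrow>
     continuous_on UNIV (\<lambda>p::'a \<times> 'a. fst p + snd p) \<and>
     continuous_on UNIV (\<lambda>p::real \<times> 'a. fst p *\<^sub>R snd p) \<and>
     (\<forall>(x::'a) U. open U \<and> x \<in> U \<longrightarrow> (\<exists>V. open V \<and> convex V \<and> x \<in> V \<and> V \<subseteq> U))"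

definition topdual :: "('a::{real_vector,topological_space} \<Rightarrow> real) set" where
  "topdual = {f. linear f \<and> continuous_on UNIV f}"

definition convex_efun :: "('a::real_vector \<Rightarrow> ereal) \<Rightarrow> bool" where
  "convex_efun f \<longleftrightarrow> convex {(x, r::real). f x \<le> ereal r}"

definition proper_efun :: "('a \<Rightarrow> ereal) \<Rightarrow> bool" where
  "proper_efun f \<longleftrightarrow> (\<forall>x. f x \<noteq> -\<infinity>) \<and> (\<exists>x. f x \<noteq> \<infinity>)"

definition edom :: "('a \<Rightarrow> ereal) \<Rightarrow> 'a set" where
  "edom f = {x. f x < \<infinity>}"

definition conj2 :: "('a \<times> 'b \<Rightarrow> ereal) \<Rightarrow> ('a \<Rightarrow> real) \<Rightarrow> ('b \<Rightarrow> real) \<Rightarrow> ereal" where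
  "conj2 f xs ys = (SUP p. ereal (xs (fst p) + ys (snd p)) - f p)"

end

theory Submission
  imports Defs
begin

text \<open>
  The inequality \<open>\<le>\<close> is elementary: any splitting \<open>x\<^sup>* = x\<^sub>1\<^sup>* + x\<^sub>2\<^sup>*\<close>
  gives \<open>\<langle>x,x\<^sup>*\<rangle> + \<langle>y,y\<^sup>*\<rangle> - \<rho>(x,y) \<le> \<phi>\<^sub>1\<^sup>*(x\<^sub>1\<^sup>*,y\<^sup>*) + \<phi>\<^sub>2\<^sup>*(x\<^sub>2\<^sup>*,y\<^sup>*)\<close>.
  For the reverse, let \<open>\<alpha> = \<rho>\<^sup>*(x\<^sup>*,y\<^sup>*)\<close> be finite and consider in \<open>E \<times> \<real>\<close>
  \<open>A = {(x,t). \<exists>y. \<phi>\<^sub>1(x,y) < t + \<langle>x,x\<^sup>*\<rangle> + \<langle>y,y\<^sup>*\<rangle> - \<alpha>}\<close> and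
  \<open>B = {(x,t). \<exists>y. \<phi>\<^sub>2(x,y) < \<langle>y,y\<^sup>*\<rangle> - t}\<close>.
  Both are convex, they are disjoint by the definition of \<open>\<alpha>\<close>, \<open>A\<close> contains a vertical ray over \<open>x\<^sub>0\<close>, and
  continuity of \<open>\<phi>\<^sub>2(\<cdot>,y\<^sub>0)\<close> at \<open>x\<^sub>0\<close> puts a box \<open>U \<times> (-\<infinity>,t\<^sub>1)\<close> into \<open>B\<close>.
  Separating \<open>A\<close> and \<open>B\<close> with the Minkowski gauge of \<open>B - A\<close> gives a hyperplane
  \<open>\<lambda>(x) + t = \<beta>\<close> which is not vertical and whose slope \<open>\<lambda>\<close> is continuous, being bounded above on
  \<open>U - x\<^sub>0\<close>; then \<open>x\<^sub>1\<^sup>* = x\<^sup>* - \<lambda>\<close>, \<open>x\<^sub>2\<^sup>* = \<lambda>\<close> attain the bound \<open>\<alpha>\<close>.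
  Hahn--Banach is obtained algebraically: by Zorn's lemma there is a minimal sublinear functional
  below the gauge, and minimal sublinear functionals are linear.
\<close>

section \<open>Sublinear functionals and the Hahn--Banach theorem\<close>

definition sublinear :: "('v::real_vector \<Rightarrow> real) \<Rightarrow> bool" where
  "sublinear q \<longleftrightarrow> (\<forall>x y. q (x + y) \<le> q x + q y) \<and> (\<forall>t x. 0 \<le> t \<longrightarrow> q (t *\<^sub>R x) = t * q x)"

lemma sublinear_add: "sublinear q \<Longrightarrow> q (x + y) \<le> q x + q y"
  unfolding sublinear_def by blast

lemma sublinear_scaleR: "sublinear q \<Longrightarrow> 0 \<le> t \<Longrightarrow> q (t *\<^sub>R x) = t * q x"
  unfolding sublinear_def by blast

lemma sublinear_0: "sublinear q \<Longrightarrow> q 0 = 0"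
  using sublinear_scaleR[of q 0 0] by simp

lemma sublinear_neg_le: "sublinear q \<Longrightarrow> - q (- x) \<le> q x"
  using sublinear_add[of q x "- x"] sublinear_0[of q] by simp

lemma cInf_mult_left:
  fixes X :: "real set"
  assumes "X \<noteq> {}" "bdd_below X" "0 < t"
  shows "Inf ((*) t ` X) = t * Inf X"
proof -
  have "mono ((*) t)"
    using assms(3) by (auto intro: monoI mult_left_mono)
  then show ?thesis
    using continuous_at_Inf_mono[of "(*) t" X] assms(1,2) by (simp add: continuous_intros)
qed

text \<open>Lowering \<open>q\<close> along the ray through \<open>a\<close> keeps it sublinear; a minimal sublinear
  functional is fixed by this operation, which makes it linear.\<close>
definition ray_inf :: "('v::real_vector \<Rightarrow> real) \<Rightarrow> 'v \<Rightarrow> real \<Rightarrow> 'v \<Rightarrow> real" where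
  "ray_inf q a c x = (INF t\<in>{0..}. q (x + t *\<^sub>R a) - t * c)"

context
  fixes q :: "'v::real_vector \<Rightarrow> real" and a c
  assumes q: "sublinear q" and c: "c \<le> q a"
begin

lemma bdd_below_ray_inf:
  "bdd_below ((\<lambda>t. q (x + t *\<^sub>R a) - t * c) ` {0..})"
proof (rule bdd_belowI2)
  fix t :: real assume "t \<in> {0..}"
  then have "q (t *\<^sub>R a) \<le> q (x + t *\<^sub>R a) + q (- x)" and "t * c \<le> q (t *\<^sub>R a)"
    using sublinear_add[OF q, of "x + t *\<^sub>R a" "- x"] sublinear_scaleR[OF q] c
    by (auto simp: mult_left_mono)
  then show "- q (- x) \<le> q (x + t *\<^sub>R a) - t * c" by linarith
qed

lemma ray_inf_le: "0 \<le> t \<Longrightarrow> ray_inf q a c x \<le> q (x + t *\<^sub>R a) - t * c"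
  unfolding ray_inf_def by (rule cInf_lower[OF _ bdd_below_ray_inf]) auto

lemma ray_inf_greatest:
  "(\<And>t. 0 \<le> t \<Longrightarrow> y \<le> q (x + t *\<^sub>R a) - t * c) \<Longrightarrow> y \<le> ray_inf q a c x"
  unfolding ray_inf_def by (rule cInf_greatest) auto

lemma ray_inf_add: "ray_inf q a c (x + y) \<le> ray_inf q a c x + ray_inf q a c y"
proof -
  have "ray_inf q a c (x + y) - (q (y + t2 *\<^sub>R a) - t2 * c) \<le> ray_inf q a c x"
    if t2: "0 \<le> t2" for t2
  proof (rule ray_inf_greatest)
    fix t1 :: real assume t1: "0 \<le> t1"
    have "ray_inf q a c (x + y) \<le> q ((x + t1 *\<^sub>R a) + (y + t2 *\<^sub>R a)) - (t1 + t2) * c"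
      using ray_inf_le[of "t1 + t2" "x + y"] t1 t2 by (simp add: algebra_simps)
    then show "ray_inf q a c (x + y) - (q (y + t2 *\<^sub>R a) - t2 * c) \<le> q (x + t1 *\<^sub>R a) - t1 * c"
      using sublinear_add[OF q, of "x + t1 *\<^sub>R a" "y + t2 *\<^sub>R a"] by (simp add: algebra_simps)
  qed
  then have "ray_inf q a c (x + y) - ray_inf q a c x \<le> ray_inf q a c y"
    by (intro ray_inf_greatest) (simp add: algebra_simps)
  then show ?thesis by simp
qed

lemma ray_inf_scaleR: "0 \<le> s \<Longrightarrow> ray_inf q a c (s *\<^sub>R x) = s * ray_inf q a c x"
proof (cases "s = 0")
  case True
  have "ray_inf q a c 0 = 0"
    unfolding ray_inf_def
  proof (rule cInf_eq_minimum)
    show "0 \<in> (\<lambda>t. q (0 + t *\<^sub>R a) - t * c) ` {0..}"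
      using sublinear_0[OF q] by (auto intro!: image_eqI[of _ _ 0])
    show "0 \<le> y" if "y \<in> (\<lambda>t. q (0 + t *\<^sub>R a) - t * c) ` {0..}" for y
      using that sublinear_scaleR[OF q] c by (auto simp: mult_left_mono)
  qed
  then show ?thesis using True by simp
next
  case False
  assume "0 \<le> s"
  with False have s: "0 < s" by simp
  have "{0::real..} = (*) s ` {0..}"
    using s by (auto simp: image_iff intro!: bexI[of _ "_ / s"])
  moreover have "q (s *\<^sub>R x + (s * t) *\<^sub>R a) - (s * t) * c = s * (q (x + t *\<^sub>R a) - t * c)" for t
    using sublinear_scaleR[OF q, of s "x + t *\<^sub>R a"] s by (simp add: scaleR_add_right algebra_simps)
  ultimately have "(\<lambda>t. q (s *\<^sub>R x + t *\<^sub>R a) - t * c) ` {0..}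
      = (*) s ` ((\<lambda>t. q (x + t *\<^sub>R a) - t * c) ` {0..})"
    by (metis (no_types, lifting) image_image image_cong)
  then show ?thesis
    unfolding ray_inf_def using cInf_mult_left[OF _ bdd_below_ray_inf s] by simp
qed

lemma sublinear_ray_inf: "sublinear (ray_inf q a c)"
  unfolding sublinear_def using ray_inf_add ray_inf_scaleR by blast

end

lemma sublinear_linearI:
  fixes m :: "'v::real_vector \<Rightarrow> real"
  assumes m: "sublinear m" and super: "\<And>x a. m x \<le> m (x + a) - m a"
  shows "linear m"
proof -
  have add: "m (x + y) = m x + m y" for x y
    using super[of x y] sublinear_add[OF m, of x y] by simp
  have neg: "m (- x) = - m x" for x
    using add[of x "- x"] sublinear_0[OF m] by simp
  show ?thesis
  proof (rule linearI)
    show "m (r *\<^sub>R x) = r *\<^sub>R m x" for r x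
      using sublinear_scaleR[OF m, of r x] sublinear_scaleR[OF m, of "- r" x] neg[of "(- r) *\<^sub>R x"]
      by (cases "0 \<le> r") auto
  qed (rule add)
qed

lemma minimal_sublinear_linear:
  fixes m :: "'v::real_vector \<Rightarrow> real"
  assumes m: "sublinear m" and minimal: "\<And>q. sublinear q \<Longrightarrow> q \<le> m \<Longrightarrow> q = m"
  shows "linear m"
proof (rule sublinear_linearI[OF m])
  fix x a
  have "ray_inf m a (m a) = m"
    using minimal sublinear_ray_inf[OF m order_refl] ray_inf_le[OF m order_refl, of 0]
    by (simp add: le_fun_def)
  then show "m x \<le> m (x + a) - m a"
    using ray_inf_le[OF m order_refl, of 1 a x] by simp
qed

lemma bdd_below_sublinear_dominated:
  assumes "\<And>q. q \<in> C \<Longrightarrow> sublinear q" "\<And>q. q \<in> C \<Longrightarrow> q \<le> p"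
  shows "bdd_below ((\<lambda>q. q x) ` C)"
proof (rule bdd_belowI2[where m = "- p (- x)"])
  fix q assume q: "q \<in> C"
  then have "q (- x) \<le> p (- x)"
    using assms(2) by (simp add: le_fun_def)
  then show "- p (- x) \<le> q x"
    using sublinear_neg_le[OF assms(1)[OF q], of x] by linarith
qed

lemma sublinear_INF_chain:
  fixes C :: "('v::real_vector \<Rightarrow> real) set"
  assumes "C \<noteq> {}" and sub: "\<And>q. q \<in> C \<Longrightarrow> sublinear q" and dom: "\<And>q. q \<in> C \<Longrightarrow> q \<le> p"
    and chain: "\<And>q1 q2. q1 \<in> C \<Longrightarrow> q2 \<in> C \<Longrightarrow> q1 \<le> q2 \<or> q2 \<le> q1"
  shows "sublinear (\<lambda>x. INF q\<in>C. q x)"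
proof -
  define m where "m x = (INF q\<in>C. q x)" for x
  have bdd: "bdd_below ((\<lambda>q. q x) ` C)" for x
    using sub dom by (rule bdd_below_sublinear_dominated)
  have le: "q \<in> C \<Longrightarrow> m x \<le> q x" for q x
    unfolding m_def by (rule cInf_lower[OF _ bdd]) auto
  have greatest: "(\<And>q. q \<in> C \<Longrightarrow> y \<le> q x) \<Longrightarrow> y \<le> m x" for x y
    unfolding m_def using \<open>C \<noteq> {}\<close> by (intro cInf_greatest) auto
  have add: "m (x + y) \<le> m x + m y" for x y
  proof -
    have "m (x + y) - q2 y \<le> q1 x" if q12: "q1 \<in> C" "q2 \<in> C" for q1 q2
    proof -
      obtain q where q: "q \<in> C" "q x \<le> q1 x" "q y \<le> q2 y"
        using chain[OF q12] q12 by (auto simp: le_fun_def)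
      then show ?thesis
        using le[OF q(1), of "x + y"] sublinear_add[OF sub[OF q(1)], of x y] by linarith
    qed
    then have "m (x + y) - q2 y \<le> m x" if "q2 \<in> C" for q2
      using that by (intro greatest) auto
    then have "m (x + y) - m x \<le> m y"
      by (intro greatest) (simp add: algebra_simps)
    then show ?thesis by simp
  qed
  have scale: "m (t *\<^sub>R x) = t * m x" if t: "0 \<le> t" for t x
  proof (cases "t = 0")
    case True
    have "(\<lambda>q. q 0) ` C = {0}"
      using sublinear_0[OF sub] \<open>C \<noteq> {}\<close> by force
    then show ?thesis using True unfolding m_def by simp
  next
    case False
    have "(\<lambda>q. q (t *\<^sub>R x)) ` C = (*) t ` ((\<lambda>q. q x) ` C)"
      using sublinear_scaleR[OF sub t] by (auto simp: image_image)
    then show ?thesis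
      unfolding m_def using cInf_mult_left[OF _ bdd] \<open>C \<noteq> {}\<close> False t by simp
  qed
  show ?thesis
    unfolding sublinear_def m_def[symmetric] using add scale by blast
qed

lemma exists_minimal_sublinear:
  fixes p :: "'v::real_vector \<Rightarrow> real"
  assumes p: "sublinear p"
  obtains m where "sublinear m" "m \<le> p" "\<And>q. sublinear q \<Longrightarrow> q \<le> m \<Longrightarrow> q = m"
proof -
  define S where "S = {q. sublinear q \<and> q \<le> p}"
  have po: "partial_order_on S (relation_of (\<ge>) S)"
    by (rule partial_order_on_relation_ofI) auto
  have "\<exists>m\<in>S. \<forall>q\<in>S. m \<ge> q \<longrightarrow> q = m"
  proof (rule predicate_Zorn[OF po])
    fix C assume C: "C \<in> Chains (relation_of (\<ge>) S)"
    then have sub: "\<And>q. q \<in> C \<Longrightarrow> sublinear q" and dom: "\<And>q. q \<in> C \<Longrightarrow> q \<le> p"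
      and chain: "\<And>q1 q2. q1 \<in> C \<Longrightarrow> q2 \<in> C \<Longrightarrow> q1 \<le> q2 \<or> q2 \<le> q1"
      unfolding Chains_def relation_of_def S_def by auto
    show "\<exists>u\<in>S. \<forall>q\<in>C. q \<ge> u"
    proof (cases "C = {}")
      case True
      then show ?thesis using p unfolding S_def by auto
    next
      case False
      define m where "m x = (INF q\<in>C. q x)" for x
      have le: "m \<le> q" if "q \<in> C" for q
        unfolding m_def le_fun_def
        using that by (auto intro: cInf_lower[OF _ bdd_below_sublinear_dominated[OF sub dom]])
      have "sublinear m"
        unfolding m_def by (rule sublinear_INF_chain[OF False sub dom chain])
      moreover obtain q0 where "q0 \<in> C"
        using False by auto
      then have "m \<le> p"
        using le dom by (blast intro: order_trans)
      ultimately show ?thesis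
        using le unfolding S_def by blast
    qed
  qed
  then show ?thesis
    using that unfolding S_def by (blast intro: order_trans)
qed

lemma sublinear_Hahn_Banach:
  fixes p :: "'v::real_vector \<Rightarrow> real"
  assumes p: "sublinear p" and pw: "1 \<le> p w"
  obtains L where "linear L" "\<And>x. L x \<le> p x" "1 \<le> L w"
proof -
  obtain m where m: "sublinear m" "m \<le> ray_inf p w 1"
    and minimal: "\<And>q. sublinear q \<Longrightarrow> q \<le> m \<Longrightarrow> q = m"
    using exists_minimal_sublinear[OF sublinear_ray_inf[OF p pw]] by blast
  have "linear m"
    by (rule minimal_sublinear_linear[OF m(1) minimal])
  moreover have "m x \<le> p x" for x
    using m(2) ray_inf_le[OF p pw, of 0 x] by (simp add: le_fun_def) (meson order_trans)
  moreover have "m (- w) \<le> - 1"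
    using m(2) ray_inf_le[OF p pw, of 1 "- w"] sublinear_0[OF p] by (simp add: le_fun_def) (meson order_trans)
  then have "1 \<le> m w"
    using linear_neg[OF \<open>linear m\<close>, of w] by simp
  ultimately show ?thesis
    using that by simp
qed

definition absorbing :: "'v::real_vector set \<Rightarrow> bool" where
  "absorbing K \<longleftrightarrow> (\<forall>v. \<exists>c>0. c *\<^sub>R v \<in> K)"

definition minkowski_functional :: "'v::real_vector set \<Rightarrow> 'v \<Rightarrow> real" where
  "minkowski_functional K v = Inf {s. 0 < s \<and> inverse s *\<^sub>R v \<in> K}"

context
  fixes K :: "'v::real_vector set"
  assumes K: "convex K" "0 \<in> K" "absorbing K"
begin

private abbreviation "T v \<equiv> {s::real. 0 < s \<and> inverse s *\<^sub>R v \<in> K}"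

private lemma scales_nonempty: "T v \<noteq> {}"
proof -
  obtain c where "c > 0" "c *\<^sub>R v \<in> K"
    using K(3) unfolding absorbing_def by blast
  then have "inverse c \<in> T v" by auto
  then show ?thesis by blast
qed

private lemma scales_bdd_below: "bdd_below (T v)"
  by (auto intro: bdd_belowI[of _ 0])

private lemma scales_upclosed:
  assumes "s \<in> T v" "s \<le> s'"
  shows "s' \<in> T v"
proof -
  have s: "0 < s" "inverse s *\<^sub>R v \<in> K" and s': "0 < s'"
    using assms by auto
  have "(s / s') *\<^sub>R (inverse s *\<^sub>R v) + (1 - s / s') *\<^sub>R 0 \<in> K"
    using convexD[OF K(1) s(2) K(2), of "s / s'" "1 - s / s'"] s s' assms(2) by auto
  moreover have "(s / s') *\<^sub>R (inverse s *\<^sub>R v) = inverse s' *\<^sub>R v"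
    using s s' by (simp add: field_simps)
  ultimately show ?thesis using s' by auto
qed

private lemma scales_above: "minkowski_functional K v < s \<Longrightarrow> s \<in> T v"
  unfolding minkowski_functional_def
  using cInf_less_iff[OF scales_nonempty scales_bdd_below] scales_upclosed less_imp_le by meson

lemma minkowski_functional_le_1: "k \<in> K \<Longrightarrow> minkowski_functional K k \<le> 1"
  unfolding minkowski_functional_def by (rule cInf_lower[OF _ scales_bdd_below]) auto

lemma minkowski_functional_ge_1: "w \<notin> K \<Longrightarrow> 1 \<le> minkowski_functional K w"
  using scales_above[of w 1] by force

lemma sublinear_minkowski_functional: "sublinear (minkowski_functional K)"
  unfolding sublinear_def
proof (intro conjI allI impI)
  fix x y
  show "minkowski_functional K (x + y) \<le> minkowski_functional K x + minkowski_functional K y"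
  proof (rule field_le_epsilon)
    fix e :: real assume e: "0 < e"
    define s where "s = minkowski_functional K x + e / 2"
    define t where "t = minkowski_functional K y + e / 2"
    have st: "s \<in> T x" "t \<in> T y"
      by (rule scales_above, simp add: s_def t_def e)+
    then have "(s / (s + t)) *\<^sub>R (inverse s *\<^sub>R x) + (t / (s + t)) *\<^sub>R (inverse t *\<^sub>R y) \<in> K"
      by (intro convexD[OF K(1)]) (auto simp: add_divide_distrib[symmetric])
    moreover have "(s / (s + t)) *\<^sub>R (inverse s *\<^sub>R x) + (t / (s + t)) *\<^sub>R (inverse t *\<^sub>R y)
        = inverse (s + t) *\<^sub>R (x + y)"
      using st by (simp add: field_simps scaleR_add_right)
    ultimately have "s + t \<in> T (x + y)"
      using st by auto
    then have "minkowski_functional K (x + y) \<le> s + t"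
      unfolding minkowski_functional_def by (rule cInf_lower[OF _ scales_bdd_below])
    then show "minkowski_functional K (x + y) \<le> minkowski_functional K x + minkowski_functional K y + e"
      unfolding s_def t_def by simp
  qed
next
  fix t :: real and x assume t: "0 \<le> t"
  show "minkowski_functional K (t *\<^sub>R x) = t * minkowski_functional K x"
  proof (cases "t = 0")
    case True
    then have "T (t *\<^sub>R x) = {0<..}" using K(2) by auto
    then show ?thesis using True unfolding minkowski_functional_def by simp
  next
    case False
    with t have "0 < t" by simp
    then have "T (t *\<^sub>R x) = (*) t ` T x"
      by (auto simp: image_iff field_simps intro!: exI[of _ "_ / t"])
    then show ?thesis
      unfolding minkowski_functional_def using cInf_mult_left[OF scales_nonempty scales_bdd_below \<open>0 < t\<close>] by simp
  qed
qed

end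

lemma absorbing_convex_separation:
  fixes K :: "'v::real_vector set"
  assumes "convex K" "0 \<in> K" "absorbing K" "w \<notin> K"
  obtains L :: "'v \<Rightarrow> real" where "linear L" "\<And>k. k \<in> K \<Longrightarrow> L k \<le> 1" "1 \<le> L w"
proof -
  obtain L where L: "linear L" "\<And>x. L x \<le> minkowski_functional K x" "1 \<le> L w"
    using sublinear_Hahn_Banach[OF sublinear_minkowski_functional minkowski_functional_ge_1] assms
    by metis
  show ?thesis
  proof (rule that)
    show "L k \<le> 1" if "k \<in> K" for k
      using minkowski_functional_le_1[OF assms(1-3) that] L(2)[of k] by linarith
  qed (fact L)+
qed

section \<open>Locally convex spaces\<close>

context
  fixes E :: "'a::{real_vector,t2_space} itself"
  assumes E: "locally_convex_space E"
begin

lemma lcs_continuous_on_add_right: "continuous_on UNIV (\<lambda>v::'a. v + b)"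
proof -
  have "continuous_on UNIV (\<lambda>v::'a. (\<lambda>p. fst p + snd p) (v, b))"
    using E unfolding locally_convex_space_def
    by (intro continuous_on_compose2[OF _ continuous_on_Pair[OF continuous_on_id continuous_on_const]]) auto
  then show ?thesis by simp
qed

lemma lcs_continuous_on_scaleR_right: "continuous_on UNIV (\<lambda>v::'a. c *\<^sub>R v)"
proof -
  have "continuous_on UNIV (\<lambda>v::'a. (\<lambda>p. fst p *\<^sub>R snd p) (c, v))"
    using E unfolding locally_convex_space_def
    by (intro continuous_on_compose2[OF _ continuous_on_Pair[OF continuous_on_const continuous_on_id]]) auto
  then show ?thesis by simp
qed

lemma lcs_continuous_on_scaleR_left: "continuous_on UNIV (\<lambda>c. c *\<^sub>R (v::'a))"
proof -
  have "continuous_on UNIV (\<lambda>c. (\<lambda>p. fst p *\<^sub>R snd p) (c, v::'a))"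
    using E unfolding locally_convex_space_def
    by (intro continuous_on_compose2[OF _ continuous_on_Pair[OF continuous_on_id continuous_on_const]]) auto
  then show ?thesis by simp
qed

lemma lcs_open_affine_vimage:
  assumes "open U"
  shows "open {v::'a. c *\<^sub>R (v - b) \<in> U}"
proof -
  have "continuous_on UNIV (\<lambda>v::'a. c *\<^sub>R (v + - b))"
    by (rule continuous_on_compose2[OF lcs_continuous_on_scaleR_right lcs_continuous_on_add_right]) auto
  from open_vimage[OF assms this] show ?thesis
    by (simp add: vimage_def)
qed

lemma lcs_small_scalars:
  assumes "open U" "0 \<in> U"
  obtains e where "0 < e" "\<And>c. \<bar>c\<bar> < e \<Longrightarrow> c *\<^sub>R (v::'a) \<in> U"
proof -
  have "open {c. c *\<^sub>R v \<in> U}" "0 \<in> {c. c *\<^sub>R v \<in> U}"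
    using open_vimage[OF assms(1) lcs_continuous_on_scaleR_left] assms(2) by (simp_all add: vimage_def)
  then obtain e where e: "0 < e" "ball 0 e \<subseteq> {c. c *\<^sub>R v \<in> U}"
    by (meson openE)
  show ?thesis
  proof (rule that[OF e(1)])
    fix c :: real assume "\<bar>c\<bar> < e"
    then have "c \<in> ball 0 e" by simp
    then show "c *\<^sub>R v \<in> U" using e(2) by blast
  qed
qed

lemma lcs_absorbing_prod:
  fixes K :: "('a \<times> real) set"
  assumes "open U" "0 \<in> U" and UK: "\<And>z r. z \<in> U \<Longrightarrow> r < 1 \<Longrightarrow> (z, r) \<in> K"
  shows "absorbing K"
  unfolding absorbing_def
proof
  fix v :: "'a \<times> real"
  obtain z r where v: "v = (z, r)" by (cases v)
  obtain e where e: "0 < e" "\<And>c. \<bar>c\<bar> < e \<Longrightarrow> c *\<^sub>R z \<in> U"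
    using lcs_small_scalars[OF assms(1,2)] by blast
  define c where "c = min (e / 2) (1 / (\<bar>r\<bar> + 1))"
  have c: "0 < c" "c < e" "c \<le> 1 / (\<bar>r\<bar> + 1)"
    unfolding c_def using e by auto
  then have "c * (\<bar>r\<bar> + 1) \<le> 1"
    by (simp add: pos_le_divide_eq add_pos_nonneg)
  moreover have "c * r \<le> c * \<bar>r\<bar>"
    using c(1) by (intro mult_left_mono) auto
  moreover have "c * (\<bar>r\<bar> + 1) = c * \<bar>r\<bar> + c"
    by (simp add: distrib_left)
  ultimately have "c * r < 1"
    using c(1) by linarith
  then show "\<exists>c>0. c *\<^sub>R v \<in> K"
    using UK e c unfolding v by auto
qed

lemma lcs_linear_continuous_if_bounded_above:
  fixes f :: "'a \<Rightarrow> real"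
  assumes f: "linear f" and U: "open U" "0 \<in> U" and M: "\<And>z. z \<in> U \<Longrightarrow> f z \<le> M"
  shows "continuous_on UNIV f"
  unfolding continuous_on_topological
proof (intro ballI allI impI)
  fix x B assume B: "open B" "f x \<in> B"
  then obtain e where e: "0 < e" "ball (f x) e \<subseteq> B"
    by (meson openE)
  have "0 \<le> M" using M[OF U(2)] linear_0[OF f] by simp
  define k where "k = (M + 1) / e"
  have k: "0 < k" "e * k = M + 1"
    unfolding k_def using e \<open>0 \<le> M\<close> by auto
  define A where "A = {y. k *\<^sub>R (y - x) \<in> U} \<inter> {y. (- k) *\<^sub>R (y - x) \<in> U}"
  have "open A"
    unfolding A_def by (intro open_Int lcs_open_affine_vimage U(1))
  moreover have "x \<in> A"
    unfolding A_def using U(2) by simp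
  moreover have "f y \<in> B" if "y \<in> A" for y
  proof -
    have scale: "f (c *\<^sub>R (y - x)) = c * (f y - f x)" for c
      by (simp add: linear_scale[OF f] linear_diff[OF f])
    have "k * (f y - f x) \<le> M" "- k * (f y - f x) \<le> M"
      using M that unfolding A_def scale[symmetric] by auto
    then have "k * (f y - f x) < k * e" "k * (f x - f y) < k * e"
      using k by (auto simp: algebra_simps)
    then have "\<bar>f y - f x\<bar> < e"
      using k(1) by (auto simp: abs_less_iff)
    then show ?thesis
      using e by (auto simp: dist_real_def)
  qed
  ultimately show "\<exists>A. open A \<and> x \<in> A \<and> (\<forall>y\<in>UNIV. y \<in> A \<longrightarrow> f y \<in> B)" by blast
qed

end

lemma linear_prod_real_eq:
  fixes \<Lambda> :: "'a::real_vector \<times> real \<Rightarrow> real"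
  assumes "linear \<Lambda>"
  shows "\<Lambda> (x, t) = \<Lambda> (x, 0) + t * \<Lambda> (0, 1)"
proof -
  have "\<Lambda> (x, t) = \<Lambda> ((x, 0) + t *\<^sub>R (0, 1))"
    by simp
  also have "\<dots> = \<Lambda> (x, 0) + t * \<Lambda> (0, 1)"
    by (simp only: linear_add[OF assms] linear_scale[OF assms] real_scaleR_def)
  finally show ?thesis .
qed

lemma separating_value:
  fixes f :: "'a \<Rightarrow> real"
  assumes "\<And>a b. a \<in> A \<Longrightarrow> b \<in> B \<Longrightarrow> f b \<le> f a" "a0 \<in> A" "b0 \<in> B"
  obtains \<beta> where "\<And>a. a \<in> A \<Longrightarrow> \<beta> \<le> f a" "\<And>b. b \<in> B \<Longrightarrow> f b \<le> \<beta>"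
proof
  have bdd: "bdd_above (f ` B)"
    using assms(1,2) by (intro bdd_aboveI2[where M = "f a0"])
  show "f b \<le> Sup (f ` B)" if "b \<in> B" for b
    using that by (intro cSup_upper[OF _ bdd]) auto
  show "Sup (f ` B) \<le> f a" if "a \<in> A" for a
    using assms(1,3) that by (intro cSup_least) auto
qed

lemma convex_disjoint_separation:
  fixes A B :: "'v::real_vector set" and a0 b0 :: 'v
  defines "K \<equiv> {b - a + (a0 - b0) | a b. a \<in> A \<and> b \<in> B}"
  assumes A: "convex A" and B: "convex B" and disj: "A \<inter> B = {}" and a0: "a0 \<in> A" and b0: "b0 \<in> B"
    and absorbing: "absorbing K"
  obtains \<Lambda> :: "'v \<Rightarrow> real" where "linear \<Lambda>" "\<And>k. k \<in> K \<Longrightarrow> \<Lambda> k \<le> 1" "1 \<le> \<Lambda> (a0 - b0)"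
proof -
  have "K = (\<lambda>x. x + (a0 - b0)) ` (\<Union>b\<in>B. \<Union>a\<in>A. {b - a})"
    unfolding K_def by blast
  also have "\<dots> = (+) (a0 - b0) ` (\<Union>b\<in>B. \<Union>a\<in>A. {b - a})"
    by (simp add: add.commute)
  finally have "convex K"
    using convex_translation[OF convex_differences[OF B A]] by simp
  moreover have "0 \<in> K"
    unfolding K_def using a0 b0 by force
  moreover have "a0 - b0 \<notin> K"
  proof
    assume "a0 - b0 \<in> K"
    then obtain a b where "a \<in> A" "b \<in> B" "b - a = 0"
      unfolding K_def by auto
    then show False
      using disj by auto
  qed
  ultimately show ?thesis
    by (rule absorbing_convex_separation[OF _ _ absorbing _ that])
qed

lemma lcs_nonvertical_separation:
  fixes A B :: "('a::{real_vector,t2_space} \<times> real) set"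
  assumes E: "locally_convex_space TYPE('a)"
    and A: "convex A" and B: "convex B" and disj: "A \<inter> B = {}"
    and up: "\<And>t. s0 \<le> t \<Longrightarrow> (x0, t) \<in> A"
    and U: "open U" "x0 \<in> U" and box: "\<And>x t. x \<in> U \<Longrightarrow> t < t1 \<Longrightarrow> (x, t) \<in> B"
  obtains lam \<beta> where "lam \<in> topdual"
    "\<And>x t. (x, t) \<in> A \<Longrightarrow> \<beta> \<le> lam x + t" "\<And>x t. (x, t) \<in> B \<Longrightarrow> lam x + t \<le> \<beta>"
proof -
  define t0 where "t0 = t1 - 1"
  define w where "w = (x0, s0) - (x0, t0)"
  have a0: "(x0, s0) \<in> A" and b0: "(x0, t0) \<in> B"
    using up box U(2) unfolding t0_def by auto
  define K where "K = {b - a + w | a b. a \<in> A \<and> b \<in> B}"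
  define U0 where "U0 = (\<lambda>z. z + x0) -` U"
  have U0: "open U0" "0 \<in> U0"
    unfolding U0_def using open_vimage[OF U(1) lcs_continuous_on_add_right[OF E]] U(2) by auto
  have U0K: "(z, r) \<in> K" if "z \<in> U0" "r < 1" for z r
  proof -
    have "(z + x0, r + t0) \<in> B"
      using box that unfolding U0_def t0_def by auto
    moreover have "(z, r) = (z + x0, r + t0) - (x0, s0) + w"
      unfolding w_def by simp
    ultimately show ?thesis
      unfolding K_def using a0 by blast
  qed
  obtain \<Lambda> :: "'a \<times> real \<Rightarrow> real"
    where \<Lambda>: "linear \<Lambda>" "\<And>k. k \<in> K \<Longrightarrow> \<Lambda> k \<le> 1" "1 \<le> \<Lambda> w"
    using convex_disjoint_separation[OF A B disj a0 b0 lcs_absorbing_prod[OF E U0 U0K, unfolded K_def w_def]]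
    unfolding K_def w_def by blast
  have sep: "\<Lambda> b \<le> \<Lambda> a" if "a \<in> A" "b \<in> B" for a b
  proof -
    have "b - a + w \<in> K"
      unfolding K_def using that by blast
    then have "\<Lambda> (b - a + w) \<le> 1"
      by (rule \<Lambda>(2))
    then show ?thesis
      using \<Lambda>(3) by (simp add: linear_add[OF \<Lambda>(1)] linear_diff[OF \<Lambda>(1)])
  qed
  define c where "c = \<Lambda> (0, 1)"
  note dec = linear_prod_real_eq[OF \<Lambda>(1), folded c_def]
  have "\<Lambda> w = c * (s0 - t0)"
    unfolding w_def using dec[of 0 "s0 - t0"] linear_0[OF \<Lambda>(1)] by (simp add: zero_prod_def)
  then have "1 \<le> c * (s0 - t0)"
    using \<Lambda>(3) by simp
  moreover have "c * t0 \<le> c * max s0 (t0 + 1)"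
    using sep[OF up[of "max s0 (t0 + 1)"] b0] dec[of x0 "max s0 (t0 + 1)"] dec[of x0 t0]
    by (simp add: mult.commute)
  \<comment> \<open>A vertical hyperplane could not separate the ray above \<open>(x0, s0)\<close> from \<open>(x0, t0)\<close>.\<close>
  ultimately have "0 < c"
    by (cases c "0::real" rule: linorder_cases) (auto simp: mult_le_cancel_left)
  define lam where "lam x = \<Lambda> (x, 0) / c" for x
  have "linear lam"
  proof (rule linearI)
    show "lam (x + y) = lam x + lam y" for x y
      using linear_add[OF \<Lambda>(1), of "(x, 0)" "(y, 0)"] unfolding lam_def by (simp add: add_divide_distrib)
    show "lam (r *\<^sub>R x) = r *\<^sub>R lam x" for r x
      using linear_scale[OF \<Lambda>(1), of r "(x, 0)"] unfolding lam_def by simp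
  qed
  moreover have "lam z \<le> 1 / c" if "z \<in> U0" for z
    using \<Lambda>(2)[OF U0K[OF that, of 0]] \<open>0 < c\<close> unfolding lam_def by (simp add: divide_right_mono)
  ultimately have lam: "lam \<in> topdual"
    unfolding topdual_def using lcs_linear_continuous_if_bounded_above[OF E _ U0] by blast
  have "lam (fst p) + snd p = \<Lambda> p / c" for p
    using dec[of "fst p" "snd p"] \<open>0 < c\<close> unfolding lam_def by (simp add: add_divide_distrib)
  then have "lam (fst b) + snd b \<le> lam (fst a) + snd a" if "a \<in> A" "b \<in> B" for a b
    using sep[OF that] \<open>0 < c\<close> by (simp add: divide_right_mono)
  then obtain \<beta> where \<beta>: "\<And>a. a \<in> A \<Longrightarrow> \<beta> \<le> lam (fst a) + snd a"
    "\<And>b. b \<in> B \<Longrightarrow> lam (fst b) + snd b \<le> \<beta>"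
    using separating_value[where f = "\<lambda>p. lam (fst p) + snd p", OF _ a0 b0] by blast
  show ?thesis
  proof (rule that[OF lam])
    show "\<beta> \<le> lam x + t" if "(x, t) \<in> A" for x t
      using \<beta>(1)[OF that] by simp
    show "lam x + t \<le> \<beta>" if "(x, t) \<in> B" for x t
      using \<beta>(2)[OF that] by simp
  qed
qed

section \<open>Conjugates and strict sublevel sets\<close>

lemma conj2_upper: "ereal (a x + b y) - f (x, y) \<le> conj2 f a b"
  unfolding conj2_def by (rule SUP_upper2[of "(x, y)"]) auto

lemma conj2_le_ereal_iff: "conj2 f a b \<le> ereal r \<longleftrightarrow> (\<forall>x y. ereal (a x + b y - r) \<le> f (x, y))"
proof -
  have "ereal c - e \<le> ereal r \<longleftrightarrow> ereal (c - r) \<le> e" for c e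
    by (cases e) auto
  then show ?thesis
    unfolding conj2_def SUP_le_iff by auto
qed

lemma conj2_neq_minf:
  assumes "proper_efun f"
  shows "conj2 f a b \<noteq> - \<infinity>"
proof -
  obtain x y v where "f (x, y) = ereal v"
    using assms unfolding proper_efun_def by (metis ereal_cases surj_pair)
  then have "ereal (a x + b y - v) \<le> conj2 f a b"
    using conj2_upper[of a x b y f] by simp
  then show ?thesis by auto
qed

lemma ereal_le_if_less_imp_le:
  assumes "\<And>r. e < ereal r \<Longrightarrow> c \<le> r"
  shows "ereal c \<le> e"
proof (rule ccontr)
  assume "\<not> ereal c \<le> e"
  then obtain z where "e < ereal z" "ereal z < ereal c"
    using ereal_dense2[of e "ereal c"] by (auto simp: not_le)
  then show False using assms by fastforce
qed

lemma convex_efunD_less: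
  assumes "convex_efun \<phi>" "\<phi> p < ereal r" "\<phi> q < ereal s" "0 \<le> u" "0 \<le> w" "u + w = 1"
  shows "\<phi> (u *\<^sub>R p + w *\<^sub>R q) < ereal (u * r + w * s)"
proof -
  obtain r' s' where r': "\<phi> p \<le> ereal r'" "r' < r" and s': "\<phi> q \<le> ereal s'" "s' < s"
    using ereal_dense2[OF assms(2)] ereal_dense2[OF assms(3)] by (auto intro: less_imp_le)
  have "u *\<^sub>R (p, r') + w *\<^sub>R (q, s') \<in> {(p, r). \<phi> p \<le> ereal r}"
    using assms(1,4-6) r'(1) s'(1) unfolding convex_efun_def by (intro convexD) auto
  then have "\<phi> (u *\<^sub>R p + w *\<^sub>R q) \<le> ereal (u * r' + w * s')"
    by simp
  also have "u * r' + w * s' < u * r + w * s"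
  proof (cases "u = 0")
    case False
    then have "u * r' < u * r" using assms(4) r'(2) by simp
    moreover have "w * s' \<le> w * s" using assms(5) s'(2) by (simp add: mult_left_mono)
    ultimately show ?thesis by linarith
  qed (use assms(6) s'(2) in simp)
  finally show ?thesis by simp
qed

lemma convex_efun_strict_section:
  fixes \<phi> :: "'a::real_vector \<times> 'b::real_vector \<Rightarrow> ereal"
  assumes \<phi>: "convex_efun \<phi>" and g: "linear g"
  shows "convex {(x, t::real). \<exists>y. \<phi> (x, y) < ereal (g ((x, y), t) + d)}"
proof (rule convexI)
  fix p q :: "'a \<times> real" and u w :: real
  assume p: "p \<in> {(x, t::real). \<exists>y. \<phi> (x, y) < ereal (g ((x, y), t) + d)}"
    and q: "q \<in> {(x, t::real). \<exists>y. \<phi> (x, y) < ereal (g ((x, y), t) + d)}"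
    and u: "0 \<le> u" "0 \<le> w" "u + w = 1"
  obtain x t y where pxy: "p = (x, t)" "\<phi> (x, y) < ereal (g ((x, y), t) + d)"
    using p by auto
  obtain x' t' y' where qxy: "q = (x', t')" "\<phi> (x', y') < ereal (g ((x', y'), t') + d)"
    using q by auto
  have "\<phi> (u *\<^sub>R (x, y) + w *\<^sub>R (x', y')) < ereal (u * (g ((x, y), t) + d) + w * (g ((x', y'), t') + d))"
    by (rule convex_efunD_less[OF \<phi> pxy(2) qxy(2) u])
  also have "u * (g ((x, y), t) + d) + w * (g ((x', y'), t') + d)
      = g (u *\<^sub>R ((x, y), t) + w *\<^sub>R ((x', y'), t')) + d"
    using u(3) by (simp only: linear_add[OF g] linear_scale[OF g] real_scaleR_def) algebra
  finally show "u *\<^sub>R p + w *\<^sub>R q \<in> {(x, t::real). \<exists>y. \<phi> (x, y) < ereal (g ((x, y), t) + d)}"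
    unfolding pxy qxy by auto
qed

section \<open>The conjugate of the infimal convolution\<close>

lemma conj2_inf_convolution_le:
  fixes \<phi>1 \<phi>2 :: "'a::real_vector \<times> 'b::real_vector \<Rightarrow> ereal"
  assumes pr1: "proper_efun \<phi>1" and pr2: "proper_efun \<phi>2"
    and rho: "\<And>x y. \<rho> (x, y) = (INF y1. \<phi>1 (x, y1) + \<phi>2 (x, y - y1))"
    and ys: "linear ys" and sum: "\<And>x. x1 x + x2 x = xs x"
  shows "conj2 \<rho> xs ys \<le> conj2 \<phi>1 x1 ys + conj2 \<phi>2 x2 ys"
proof (cases "conj2 \<phi>1 x1 ys = \<infinity> \<or> conj2 \<phi>2 x2 ys = \<infinity>")
  case True
  then show ?thesis
    using conj2_neq_minf[OF pr1, of x1 ys] conj2_neq_minf[OF pr2, of x2 ys] by auto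
next
  case False
  then obtain r1 r2 where r1: "conj2 \<phi>1 x1 ys = ereal r1" and r2: "conj2 \<phi>2 x2 ys = ereal r2"
    using conj2_neq_minf[OF pr1, of x1 ys] conj2_neq_minf[OF pr2, of x2 ys]
    by (cases "conj2 \<phi>1 x1 ys"; cases "conj2 \<phi>2 x2 ys") auto
  have c1: "ereal (x1 x + ys y - r1) \<le> \<phi>1 (x, y)" for x y
    using r1 conj2_le_ereal_iff[of \<phi>1 x1 ys r1] by simp
  have c2: "ereal (x2 x + ys y - r2) \<le> \<phi>2 (x, y)" for x y
    using r2 conj2_le_ereal_iff[of \<phi>2 x2 ys r2] by simp
  have "ereal (xs x + ys y - (r1 + r2)) \<le> \<rho> (x, y)" for x y
    unfolding rho
  proof (rule INF_greatest)
    fix z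
    have "ereal (x1 x + ys z - r1) + ereal (x2 x + ys (y - z) - r2) \<le> \<phi>1 (x, z) + \<phi>2 (x, y - z)"
      by (intro add_mono c1 c2)
    moreover have "x1 x + ys z - r1 + (x2 x + ys (y - z) - r2) = xs x + ys y - (r1 + r2)"
      using sum[of x] linear_diff[OF ys, of y z] by simp
    ultimately show "ereal (xs x + ys y - (r1 + r2)) \<le> \<phi>1 (x, z) + \<phi>2 (x, y - z)"
      by simp
  qed
  then show ?thesis
    using r1 r2 conj2_le_ereal_iff[of \<rho> xs ys "r1 + r2"] by simp
qed

lemma conj2_inf_convolution_neq_minf:
  fixes \<phi>1 \<phi>2 :: "'a::real_vector \<times> 'b::real_vector \<Rightarrow> ereal"
  assumes rho: "\<And>x y. \<rho> (x, y) = (INF y1. \<phi>1 (x, y1) + \<phi>2 (x, y - y1))"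
    and dom1: "(x0, y1) \<in> edom \<phi>1" and dom2: "(x0, y0) \<in> edom \<phi>2"
  shows "conj2 \<rho> xs ys \<noteq> - \<infinity>"
proof -
  have "\<rho> (x0, y1 + y0) \<le> \<phi>1 (x0, y1) + \<phi>2 (x0, y0)"
    unfolding rho by (rule INF_lower2[of y1]) auto
  also have "\<dots> < \<infinity>"
    using dom1 dom2 unfolding edom_def by simp
  finally have "ereal (xs x0 + ys (y1 + y0)) - \<rho> (x0, y1 + y0) \<noteq> - \<infinity>"
    by (cases "\<rho> (x0, y1 + y0)") auto
  then show ?thesis
    using conj2_upper[of xs x0 ys "y1 + y0" \<rho>] by auto
qed

lemma topdual_diff: "f \<in> topdual \<Longrightarrow> g \<in> topdual \<Longrightarrow> (\<lambda>x. f x - g x) \<in> topdual"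
  unfolding topdual_def by (auto intro: linear_compose_sub continuous_on_diff)

lemma conj2_inf_convolution_attained:
  fixes \<phi>1 \<phi>2 :: "'a::{real_vector,t2_space} \<times> 'b::real_vector \<Rightarrow> ereal"
  assumes E: "locally_convex_space TYPE('a)"
    and cvx1: "convex_efun \<phi>1" and cvx2: "convex_efun \<phi>2"
    and rho: "\<And>x y. \<rho> (x, y) = (INF y1. \<phi>1 (x, y1) + \<phi>2 (x, y - y1))"
    and dom1: "(x0, y1) \<in> edom \<phi>1" and dom2: "(x0, y0) \<in> edom \<phi>2"
    and cont: "isCont (\<lambda>x. \<phi>2 (x, y0)) x0"
    and xs: "xs \<in> topdual" and ys: "linear ys"
    and \<alpha>: "conj2 \<rho> xs ys = ereal \<alpha>"
  obtains x1 x2 where "x1 \<in> topdual" "x2 \<in> topdual" "\<And>x. x1 x + x2 x = xs x"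
    "conj2 \<phi>1 x1 ys + conj2 \<phi>2 x2 ys \<le> conj2 \<rho> xs ys"
proof -
  have xsl: "linear xs"
    using xs unfolding topdual_def by simp
  define g1 where "g1 p = snd p + xs (fst (fst p)) + ys (snd (fst p))" for p :: "('a \<times> 'b) \<times> real"
  define g2 where "g2 p = ys (snd (fst p)) - snd p" for p :: "('a \<times> 'b) \<times> real"
  define A where "A = {(x, t::real). \<exists>y. \<phi>1 (x, y) < ereal (g1 ((x, y), t) + - \<alpha>)}"
  define B where "B = {(x, t::real). \<exists>y. \<phi>2 (x, y) < ereal (g2 ((x, y), t) + 0)}"
  have memA: "(x, t) \<in> A \<longleftrightarrow> (\<exists>y. \<phi>1 (x, y) < ereal (t + xs x + ys y - \<alpha>))" for x t
    unfolding A_def g1_def by simp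
  have memB: "(x, t) \<in> B \<longleftrightarrow> (\<exists>y. \<phi>2 (x, y) < ereal (ys y - t))" for x t
    unfolding B_def g2_def by simp
  have "linear g1" "linear g2"
    unfolding g1_def g2_def
    by (auto intro!: linearI simp: linear_add[OF xsl] linear_add[OF ys] linear_scale[OF xsl] linear_scale[OF ys] algebra_simps)
  have "convex A"
    unfolding A_def by (rule convex_efun_strict_section[OF cvx1 \<open>linear g1\<close>])
  have "convex B"
    unfolding B_def by (rule convex_efun_strict_section[OF cvx2 \<open>linear g2\<close>])
  \<comment> \<open>A point in both sets would push \<open>\<rho>\<close> below the affine minorant given by \<open>\<alpha>\<close>.\<close>
  have "A \<inter> B = {}"
  proof (rule ccontr)
    assume "A \<inter> B \<noteq> {}"
    then obtain x t z1 z2 where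
      z1: "\<phi>1 (x, z1) < ereal (t + xs x + ys z1 - \<alpha>)" and z2: "\<phi>2 (x, z2) < ereal (ys z2 - t)"
      unfolding memA memB by (auto simp: memA memB)
    have "\<rho> (x, z1 + z2) \<le> \<phi>1 (x, z1) + \<phi>2 (x, z2)"
      unfolding rho by (rule INF_lower2[of z1]) auto
    also have "\<dots> < ereal (t + xs x + ys z1 - \<alpha>) + ereal (ys z2 - t)"
      by (rule ereal_add_strict_mono2[OF z1 z2])
    also have "\<dots> = ereal (xs x + ys (z1 + z2) - \<alpha>)"
      by (simp add: linear_add[OF ys])
    also have "\<dots> \<le> \<rho> (x, z1 + z2)"
      using \<alpha> conj2_le_ereal_iff[of \<rho> xs ys \<alpha>] by simp
    finally show False by simp
  qed
  obtain v1 where v1: "\<phi>1 (x0, y1) < ereal v1"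
    using dom1 ereal_dense2 unfolding edom_def by blast
  have up: "(x0, t) \<in> A" if "v1 - xs x0 - ys y1 + \<alpha> \<le> t" for t
    unfolding memA using v1 that by (intro exI[of _ y1]) (auto intro: order_less_le_trans)
  obtain v0 where v0: "\<phi>2 (x0, y0) < ereal v0"
    using dom2 ereal_dense2 unfolding edom_def by blast
  obtain U where U: "open U" "x0 \<in> U" "\<And>x. x \<in> U \<Longrightarrow> \<phi>2 (x, y0) < ereal v0"
    using cont v0 unfolding continuous_at_open by (metis open_lessThan lessThan_iff)
  have box: "(x, t) \<in> B" if "x \<in> U" "t < ys y0 - v0" for x t
    unfolding memB using U(3)[OF that(1)] that(2) by (intro exI[of _ y0]) (auto intro: order_less_le_trans)
  obtain lam \<beta> where lam: "lam \<in> topdual"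
    and sepA: "\<And>x t. (x, t) \<in> A \<Longrightarrow> \<beta> \<le> lam x + t"
    and sepB: "\<And>x t. (x, t) \<in> B \<Longrightarrow> lam x + t \<le> \<beta>"
    using lcs_nonvertical_separation[OF E \<open>convex A\<close> \<open>convex B\<close> \<open>A \<inter> B = {}\<close> up U(1,2) box] by blast
  have "conj2 \<phi>1 (\<lambda>x. xs x - lam x) ys \<le> ereal (\<alpha> - \<beta>)"
    unfolding conj2_le_ereal_iff
  proof (intro allI ereal_le_if_less_imp_le)
    fix x y r assume "\<phi>1 (x, y) < ereal r"
    then have "(x, r - xs x - ys y + \<alpha>) \<in> A"
      unfolding memA by (intro exI[of _ y]) simp
    then show "xs x - lam x + ys y - (\<alpha> - \<beta>) \<le> r"
      using sepA by fastforce
  qed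
  moreover have "conj2 \<phi>2 lam ys \<le> ereal \<beta>"
    unfolding conj2_le_ereal_iff
  proof (intro allI ereal_le_if_less_imp_le)
    fix x y r assume "\<phi>2 (x, y) < ereal r"
    then have "(x, ys y - r) \<in> B"
      unfolding memB by (intro exI[of _ y]) simp
    then show "lam x + ys y - \<beta> \<le> r"
      using sepB by fastforce
  qed
  ultimately have "conj2 \<phi>1 (\<lambda>x. xs x - lam x) ys + conj2 \<phi>2 lam ys \<le> conj2 \<rho> xs ys"
    using \<alpha> add_mono by fastforce
  then show ?thesis
    using that[OF topdual_diff[OF xs lam] lam] by simp
qed

theorem theorem4p2:
  fixes \<phi>1 \<phi>2 :: "'a::{real_vector,t2_space} \<times> 'b::{real_vector,t2_space} \<Rightarrow> ereal"
    and \<rho> :: "'a \<times> 'b \<Rightarrow> ereal"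
  assumes E: "locally_convex_space TYPE('a)"
    and F: "locally_convex_space TYPE('b)"
    and cvx1: "convex_efun \<phi>1" and pr1: "proper_efun \<phi>1"
    and cvx2: "convex_efun \<phi>2" and pr2: "proper_efun \<phi>2"
    and rho: "\<And>x y. \<rho> (x, y) = (INF y1. \<phi>1 (x, y1) + \<phi>2 (x, y - y1))"
    and dom2: "(x0, y0) \<in> edom \<phi>2"
    and dom1: "x0 \<in> fst ` edom \<phi>1"
    and cont: "isCont (\<lambda>x. \<phi>2 (x, y0)) x0"
    and xs: "xs \<in> topdual" and ys: "ys \<in> topdual"
  shows "conj2 \<rho> xs ys =
           Inf {conj2 \<phi>1 x1 ys + conj2 \<phi>2 x2 ys | x1 x2.
                  x1 \<in> topdual \<and> x2 \<in> topdual \<and> (\<forall>x. x1 x + x2 x = xs x)}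
         \<and> (\<bar>conj2 \<rho> xs ys\<bar> \<noteq> \<infinity> \<longrightarrow>
              (\<exists>x1 x2. x1 \<in> topdual \<and> x2 \<in> topdual \<and> (\<forall>x. x1 x + x2 x = xs x) \<and>
                  conj2 \<rho> xs ys = conj2 \<phi>1 x1 ys + conj2 \<phi>2 x2 ys))"
proof -
  define S where "S = {conj2 \<phi>1 x1 ys + conj2 \<phi>2 x2 ys | x1 x2.
                  x1 \<in> topdual \<and> x2 \<in> topdual \<and> (\<forall>x. x1 x + x2 x = xs x)}"
  have ysl: "linear ys"
    using ys unfolding topdual_def by simp
  obtain y1 where dom1: "(x0, y1) \<in> edom \<phi>1"
    using dom1 by auto
  have weak: "conj2 \<rho> xs ys \<le> s" if "s \<in> S" for s
    using that conj2_inf_convolution_le[OF pr1 pr2 rho ysl] unfolding S_def by auto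
  have attained: "\<exists>x1 x2. x1 \<in> topdual \<and> x2 \<in> topdual \<and> (\<forall>x. x1 x + x2 x = xs x) \<and>
      conj2 \<rho> xs ys = conj2 \<phi>1 x1 ys + conj2 \<phi>2 x2 ys" if finite: "conj2 \<rho> xs ys \<noteq> \<infinity>"
  proof -
    obtain \<alpha> where "conj2 \<rho> xs ys = ereal \<alpha>"
      using finite conj2_inf_convolution_neq_minf[OF rho dom1 dom2] by (cases "conj2 \<rho> xs ys") auto
    then obtain x1 x2 where "x1 \<in> topdual" "x2 \<in> topdual" "\<And>x. x1 x + x2 x = xs x"
      "conj2 \<phi>1 x1 ys + conj2 \<phi>2 x2 ys \<le> conj2 \<rho> xs ys"
      using conj2_inf_convolution_attained[OF E cvx1 cvx2 rho dom1 dom2 cont xs ysl] by blast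
    with weak show ?thesis
      unfolding S_def by (blast intro: antisym)
  qed
  have "conj2 \<rho> xs ys = Inf S"
  proof (rule antisym)
    show "conj2 \<rho> xs ys \<le> Inf S"
      using weak by (rule Inf_greatest)
    show "Inf S \<le> conj2 \<rho> xs ys"
      using attained unfolding S_def by (cases "conj2 \<rho> xs ys = \<infinity>") (auto intro: Inf_lower)
  qed
  then show ?thesis
    using attained unfolding S_def by auto
qed

end
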